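(* Let $H_1,H_2$ be Hopf algebras over $\mathbb{C}$ forming a matched pair, with left action $\triangleright:H_2\otimes H_1\to H_1$ and right action $\triangleleft:H_2\otimes H_1\to H_2$, and let $H=H_1\bowtie H_2$ be the associated double cross product Hopf algebra. Let $H_1'$ be a Hopf algebra nondegenerately dually paired with $H_1$ by $\langle\ ,\ \rangle$, and assume that the right action $\triangleleft$ of $H_1$ on $H_2$ is dual to a left coaction $a\mapsto a_{(0)}\otimes a_{(1)}\in H_1'\otimes H_2$, i.e. $a\triangleleft h=\langle a_{(0)},h\rangle a_{(1)}$ for all $a\in H_2$, $h\in H_1$, so that the bicrossproduct Hopf algebra $H_2{\triangleright\!\!\!\blacktriangleleft} H_1'$ is defined. Consider the two algebras built on the vector space $H_1\otimes H_2\otimes H_1'$: (i) $A_1=(H_1\bowtie H_2){\triangleright\!\!\!<} H_1'$, the cross product of $H_1\bowtie H_2$ by its right action on $H_1'$ given by $\phi\triangleleft(h\otimes a)=\langle\phi_{(1)},h\rangle\,\phi_{(2)}\triangleleft a$, where $\langle\phi\triangleleft a,h\rangle=\langle\phi,a\triangleright h\rangle$; its product is $(x\otimes\phi)(y\otimes\psi)=xy_{(1)}\otimes(\phi\triangleleft y_{(2)})\psi$ for $x,y\in H_1\bowtie H_2$, $\phi,\psi\in H_1'$; (ii) $A_2=H_1{>\!\!\!\triangleleft}(H_2{\triangleright\!\!\!\blacktriangleleft} H_1')$, the cross product of $H_2{\triangleright\!\!\!\blacktriangleleft} H_1'$ by its left action on $H_1$ given by $(a\otimes\phi)\triangleright h=(a\triangleright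 h_{(1)})\langle\phi,h_{(2)}\rangle$; its product is $(h\otimes X)(g\otimes Y)=h(X_{(1)}\triangleright g)\otimes X_{(2)}Y$ for $h,g\in H_1$, $X,Y\in H_2{\triangleright\!\!\!\blacktriangleleft} H_1'$. Then the products of $A_1$ and $A_2$ on $H_1\otimes H_2\otimes H_1'$ coincide, so there is a single algebra $A=(H_1\bowtie H_2){\triangleright\!\!\!<} H_1'=H_1{>\!\!\!\triangleleft}(H_2{\triangleright\!\!\!\blacktriangleleft} H_1')$. It contains $H_1\bowtie H_2$ (as the elements $h\otimes a\otimes 1$) and $H_2{\triangleright\!\!\!\blacktriangleleft} H_1'$ (as the elements $1\otimes a\otimes\phi$) as subalgebras, and it also contains the Heisenberg–Weyl algebra $H_1{\triangleright\!\!\!<} H_1'=H_1{>\!\!\!\triangleleft} H_1'$ (the elements $h\otimes 1\otimes\phi$, with product $(h\otimes\phi)(g\otimes\psi)=hg_{(1)}\otimes\langle\phi_{(1)},g_{(2)}\rangle\phi_{(2)}\psi$).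
   Context: Sweedler notation $\Delta h=h_{(1)}\otimes h_{(2)}$ is used. A matched pair means the actions satisfy the conditions making the following a Hopf algebra: the double cross product $H_1\bowtie H_2$ is the vector space $H_1\otimes H_2$ with product $(h\otimes a)(g\otimes b)=h(a_{(1)}\triangleright g_{(1)})\otimes(a_{(2)}\triangleleft g_{(2)})b$, tensor product coproduct, and $H_1,H_2$ embedded as subalgebras $h\otimes1$, $1\otimes a$. The bicrossproduct $H_2{\triangleright\!\!\!\blacktriangleleft} H_1'$ is the vector space $H_2\otimes H_1'$ with product $(a\otimes\phi)(b\otimes\psi)=ab_{(1)}\otimes(\phi\triangleleft b_{(2)})\psi$ and coproduct $\Delta(a\otimes\phi)=(a_{(1)}\otimes a_{(2)(0)}\phi_{(1)})\otimes(a_{(2)(1)}\otimes\phi_{(2)})$, where $\phi\triangleleft b$ is the right action of $H_2$ on $H_1'$ defined by $\langle\phi\triangleleft b,h\rangle=\langle\phi,b\triangleright h\rangle$. *)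

theory Defs
  imports Complex_Main "HOL-Library.Poly_Mapping"
begin

text \<open>A complex vector space is represented by a basis index type 'i: its elements are the
finitely supported coefficient functions 'i \<Rightarrow>0 complex.  The tensor product of the spaces
with bases 'i and 'j is the space with basis 'i \<times> 'j.  Linear and bilinear maps are given on
basis vectors and extended linearly.\<close>

type_synonym 'i vec = "'i \<Rightarrow>\<^sub>0 complex"

definition bv :: "'i \<Rightarrow> 'i vec" where
  "bv i = Poly_Mapping.single i 1"

definition vsc :: "complex \<Rightarrow> 'i vec \<Rightarrow> 'i vec" where
  "vsc c v = Poly_Mapping.map (\<lambda>x. c * x) v"

definition lin :: "('i \<Rightarrow> 'j vec) \<Rightarrow> 'i vec \<Rightarrow> 'j vec" where
  "lin f v = (\<Sum>i\<in>Poly_Mapping.keys v. vsc (Poly_Mapping.lookup v i) (f i))"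

definition lin2 :: "('i \<Rightarrow> 'j \<Rightarrow> 'k vec) \<Rightarrow> 'i vec \<Rightarrow> 'j vec \<Rightarrow> 'k vec" where
  "lin2 f u v = lin (\<lambda>i. lin (f i) v) u"

definition lfun :: "('i \<Rightarrow> complex) \<Rightarrow> 'i vec \<Rightarrow> complex" where
  "lfun f v = (\<Sum>i\<in>Poly_Mapping.keys v. Poly_Mapping.lookup v i * f i)"

definition tens :: "'i vec \<Rightarrow> 'j vec \<Rightarrow> ('i \<times> 'j) vec" where
  "tens u v = lin2 (\<lambda>i j. bv (i, j)) u v"

definition tmap :: "('i vec \<Rightarrow> 'k vec) \<Rightarrow> ('j vec \<Rightarrow> 'l vec) \<Rightarrow> ('i \<times> 'j) vec \<Rightarrow> ('k \<times> 'l) vec" where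
  "tmap f g = lin (\<lambda>(i, j). tens (f (bv i)) (g (bv j)))"

definition assoc_r :: "(('i \<times> 'j) \<times> 'k) vec \<Rightarrow> ('i \<times> ('j \<times> 'k)) vec" where
  "assoc_r = lin (\<lambda>((i, j), k). bv (i, (j, k)))"

text \<open>Structure maps on basis vectors: product, unit, coproduct, counit, antipode.\<close>
record 'i hopf =
  hm :: "'i \<Rightarrow> 'i \<Rightarrow> 'i vec"
  hu :: "'i vec"
  hc :: "'i \<Rightarrow> ('i \<times> 'i) vec"
  he :: "'i \<Rightarrow> complex"
  hs :: "'i \<Rightarrow> 'i vec"

definition mul :: "('i, 'z) hopf_scheme \<Rightarrow> 'i vec \<Rightarrow> 'i vec \<Rightarrow> 'i vec" where
  "mul H = lin2 (hm H)"

definition cop :: "('i, 'z) hopf_scheme \<Rightarrow> 'i vec \<Rightarrow> ('i \<times> 'i) vec" where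
  "cop H = lin (hc H)"

definition eps :: "('i, 'z) hopf_scheme \<Rightarrow> 'i vec \<Rightarrow> complex" where
  "eps H = lfun (he H)"

definition ant :: "('i, 'z) hopf_scheme \<Rightarrow> 'i vec \<Rightarrow> 'i vec" where
  "ant H = lin (hs H)"

definition mulT :: "('i, 'z) hopf_scheme \<Rightarrow> ('i \<times> 'i) vec \<Rightarrow> ('i \<times> 'i) vec \<Rightarrow> ('i \<times> 'i) vec" where
  "mulT H = lin2 (\<lambda>(a, b) (c, d). tens (mul H (bv a) (bv c)) (mul H (bv b) (bv d)))"

definition hopf_algebra :: "('i, 'z) hopf_scheme \<Rightarrow> bool" where
  "hopf_algebra H \<longleftrightarrow>
     (\<forall>x y z. mul H (mul H x y) z = mul H x (mul H y z)) \<and>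
     (\<forall>x. mul H (hu H) x = x \<and> mul H x (hu H) = x) \<and>
     (\<forall>x. assoc_r (tmap (cop H) id (cop H x)) = tmap id (cop H) (cop H x)) \<and>
     (\<forall>x. lin (\<lambda>(a, b). vsc (he H a) (bv b)) (cop H x) = x \<and>
          lin (\<lambda>(a, b). vsc (he H b) (bv a)) (cop H x) = x) \<and>
     (\<forall>x y. cop H (mul H x y) = mulT H (cop H x) (cop H y)) \<and>
     cop H (hu H) = tens (hu H) (hu H) \<and>
     (\<forall>x y. eps H (mul H x y) = eps H x * eps H y) \<and>
     eps H (hu H) = 1 \<and>
     (\<forall>x. lin (\<lambda>(a, b). mul H (ant H (bv a)) (bv b)) (cop H x) = vsc (eps H x) (hu H) \<and>
          lin (\<lambda>(a, b). mul H (bv a) (ant H (bv b))) (cop H x) = vsc (eps H x) (hu H))"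

definition pair :: "('c \<Rightarrow> 'a \<Rightarrow> complex) \<Rightarrow> 'c vec \<Rightarrow> 'a vec \<Rightarrow> complex" where
  "pair p \<phi> h = lfun (\<lambda>c. lfun (p c) h) \<phi>"

definition pairT :: "('c \<Rightarrow> 'a \<Rightarrow> complex) \<Rightarrow> ('c \<times> 'c) vec \<Rightarrow> ('a \<times> 'a) vec \<Rightarrow> complex" where
  "pairT p = pair (\<lambda>(c1, c2) (a1, a2). p c1 a1 * p c2 a2)"

definition dual_pairing ::
  "('c, 'z1) hopf_scheme \<Rightarrow> ('a, 'z2) hopf_scheme \<Rightarrow> ('c \<Rightarrow> 'a \<Rightarrow> complex) \<Rightarrow> bool" where
  "dual_pairing H' H p \<longleftrightarrow>
     (\<forall>\<phi> \<psi> h. pair p (mul H' \<phi> \<psi>) h = pairT p (tens \<phi> \<psi>) (cop H h)) \<and>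
     (\<forall>\<phi> h g. pair p \<phi> (mul H h g) = pairT p (cop H' \<phi>) (tens h g)) \<and>
     (\<forall>h. pair p (hu H') h = eps H h) \<and>
     (\<forall>\<phi>. pair p \<phi> (hu H) = eps H' \<phi>) \<and>
     (\<forall>\<phi> h. pair p (ant H' \<phi>) h = pair p \<phi> (ant H h))"

definition nondegenerate :: "('c \<Rightarrow> 'a \<Rightarrow> complex) \<Rightarrow> bool" where
  "nondegenerate p \<longleftrightarrow>
     (\<forall>\<phi>. (\<forall>h. pair p \<phi> h = 0) \<longrightarrow> \<phi> = 0) \<and>
     (\<forall>h. (\<forall>\<phi>. pair p \<phi> h = 0) \<longrightarrow> h = 0)"

text \<open>lt a h = a \<triangleright> h (left action of H2 on H1), rt a h = a \<triangleleft> h (right action of H1 on H2),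
given on basis vectors.  Matched pair axioms as in Majid, Foundations of Quantum Group Theory,
Def. 7.2.1.\<close>
definition matched_pair ::
  "('a, 'z1) hopf_scheme \<Rightarrow> ('b, 'z2) hopf_scheme \<Rightarrow>
   ('b \<Rightarrow> 'a \<Rightarrow> 'a vec) \<Rightarrow> ('b \<Rightarrow> 'a \<Rightarrow> 'b vec) \<Rightarrow> bool" where
  "matched_pair H1 H2 lt rt \<longleftrightarrow>
    (let L = lin2 lt; R = lin2 rt in
     \<comment> \<open>\<triangleright> is a left action, \<triangleleft> is a right action\<close>
     (\<forall>a b h. L (mul H2 a b) h = L a (L b h)) \<and> (\<forall>h. L (hu H2) h = h) \<and>
     (\<forall>a h g. R a (mul H1 h g) = R (R a h) g) \<and> (\<forall>a. R a (hu H1) = a) \<and>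
     \<comment> \<open>H1 is a left H2-module coalgebra\<close>
     (\<forall>a h. cop H1 (L a h) =
        lin (\<lambda>((a1, a2), (h1, h2)). tens (L (bv a1) (bv h1)) (L (bv a2) (bv h2)))
            (tens (cop H2 a) (cop H1 h))) \<and>
     (\<forall>a h. eps H1 (L a h) = eps H2 a * eps H1 h) \<and>
     \<comment> \<open>H2 is a right H1-module coalgebra\<close>
     (\<forall>a h. cop H2 (R a h) =
        lin (\<lambda>((a1, a2), (h1, h2)). tens (R (bv a1) (bv h1)) (R (bv a2) (bv h2)))
            (tens (cop H2 a) (cop H1 h))) \<and>
     (\<forall>a h. eps H2 (R a h) = eps H2 a * eps H1 h) \<and>
     \<comment> \<open>a \<triangleright> (h g) = (a(1) \<triangleright> h(1)) ((a(2) \<triangleleft> h(2)) \<triangleright> g),  a \<triangleright> 1 = \<epsilon>(a) 1\<close>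
     (\<forall>a h g. L a (mul H1 h g) =
        lin (\<lambda>((a1, a2), (h1, h2)). mul H1 (L (bv a1) (bv h1)) (L (R (bv a2) (bv h2)) g))
            (tens (cop H2 a) (cop H1 h))) \<and>
     (\<forall>a. L a (hu H1) = vsc (eps H2 a) (hu H1)) \<and>
     \<comment> \<open>(a b) \<triangleleft> h = (a \<triangleleft> (b(1) \<triangleright> h(1))) (b(2) \<triangleleft> h(2)),  1 \<triangleleft> h = \<epsilon>(h) 1\<close>
     (\<forall>a b h. R (mul H2 a b) h =
        lin (\<lambda>((b1, b2), (h1, h2)). mul H2 (R a (L (bv b1) (bv h1))) (R (bv b2) (bv h2)))
            (tens (cop H2 b) (cop H1 h))) \<and>
     (\<forall>h. R (hu H2) h = vsc (eps H1 h) (hu H2)) \<and>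
     \<comment> \<open>a(1) \<triangleleft> h(1) \<otimes> a(2) \<triangleright> h(2) = a(2) \<triangleleft> h(2) \<otimes> a(1) \<triangleright> h(1)\<close>
     (\<forall>a h.
        lin (\<lambda>((a1, a2), (h1, h2)). tens (R (bv a1) (bv h1)) (L (bv a2) (bv h2)))
            (tens (cop H2 a) (cop H1 h)) =
        lin (\<lambda>((a1, a2), (h1, h2)). tens (R (bv a2) (bv h2)) (L (bv a1) (bv h1)))
            (tens (cop H2 a) (cop H1 h))))"

text \<open>Double cross product H1 \<bowtie> H2 on H1 \<otimes> H2:
 (h \<otimes> a)(g \<otimes> b) = h (a(1) \<triangleright> g(1)) \<otimes> (a(2) \<triangleleft> g(2)) b, tensor product coproduct.\<close>
definition dcp_mul ::
  "('a, 'z1) hopf_scheme \<Rightarrow> ('b, 'z2) hopf_scheme \<Rightarrow>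
   ('b \<Rightarrow> 'a \<Rightarrow> 'a vec) \<Rightarrow> ('b \<Rightarrow> 'a \<Rightarrow> 'b vec) \<Rightarrow>
   ('a \<times> 'b) vec \<Rightarrow> ('a \<times> 'b) vec \<Rightarrow> ('a \<times> 'b) vec" where
  "dcp_mul H1 H2 lt rt = lin2 (\<lambda>(h, a) (g, b).
     lin (\<lambda>((a1, a2), (g1, g2)).
            tens (mul H1 (bv h) (lin2 lt (bv a1) (bv g1))) (mul H2 (lin2 rt (bv a2) (bv g2)) (bv b)))
         (tens (cop H2 (bv a)) (cop H1 (bv g))))"

definition dcp_cop ::
  "('a, 'z1) hopf_scheme \<Rightarrow> ('b, 'z2) hopf_scheme \<Rightarrow> ('a \<times> 'b) vec \<Rightarrow> (('a \<times> 'b) \<times> ('a \<times> 'b)) vec" where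
  "dcp_cop H1 H2 = lin (\<lambda>(g, b).
     lin (\<lambda>((g1, g2), (b1, b2)). tens (bv (g1, b1)) (bv (g2, b2)))
         (tens (cop H1 (bv g)) (cop H2 (bv b))))"

text \<open>ra \<phi> a = \<phi> \<triangleleft> a (right action of H2 on H1' on basis vectors), co a = a(0) \<otimes> a(1)
(left coaction of H1' on H2, on basis vectors).\<close>
definition bcp_mul ::
  "('b, 'z2) hopf_scheme \<Rightarrow> ('c, 'z3) hopf_scheme \<Rightarrow> ('c \<Rightarrow> 'b \<Rightarrow> 'c vec) \<Rightarrow>
   ('b \<times> 'c) vec \<Rightarrow> ('b \<times> 'c) vec \<Rightarrow> ('b \<times> 'c) vec" where
  "bcp_mul H2 H' ra = lin2 (\<lambda>(a, \<phi>) (b, \<psi>).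
     lin (\<lambda>(b1, b2). tens (mul H2 (bv a) (bv b1)) (mul H' (lin2 ra (bv \<phi>) (bv b2)) (bv \<psi>)))
         (cop H2 (bv b)))"

text \<open>\<Delta>(a \<otimes> \<phi>) = (a(1) \<otimes> a(2)(0) \<phi>(1)) \<otimes> (a(2)(1) \<otimes> \<phi>(2))\<close>
definition bcp_cop ::
  "('b, 'z2) hopf_scheme \<Rightarrow> ('c, 'z3) hopf_scheme \<Rightarrow> ('b \<Rightarrow> ('c \<times> 'b) vec) \<Rightarrow>
   ('b \<times> 'c) vec \<Rightarrow> (('b \<times> 'c) \<times> ('b \<times> 'c)) vec" where
  "bcp_cop H2 H' co = lin (\<lambda>(a, \<phi>).
     lin (\<lambda>((a1, a2), (\<phi>1, \<phi>2)).
            lin (\<lambda>(c, a'). tens (tens (bv a1) (mul H' (bv c) (bv \<phi>1))) (tens (bv a') (bv \<phi>2)))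
                (co a2))
         (tens (cop H2 (bv a)) (cop H' (bv \<phi>))))"

definition act1 ::
  "('c, 'z3) hopf_scheme \<Rightarrow> ('c \<Rightarrow> 'a \<Rightarrow> complex) \<Rightarrow> ('c \<Rightarrow> 'b \<Rightarrow> 'c vec) \<Rightarrow>
   'c vec \<Rightarrow> ('a \<times> 'b) vec \<Rightarrow> 'c vec" where
  "act1 H' p ra = lin2 (\<lambda>\<phi> (h, a).
     lin (\<lambda>(\<phi>1, \<phi>2). vsc (p \<phi>1 h) (lin2 ra (bv \<phi>2) (bv a))) (cop H' (bv \<phi>)))"

text \<open>A1 = (H1 \<bowtie> H2) \<triangleright>< H1': (x \<otimes> \<phi>)(y \<otimes> \<psi>) = x y(1) \<otimes> (\<phi> \<triangleleft> y(2)) \<psi>, where the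
space (H1 \<otimes> H2) \<otimes> H1' is identified with H1 \<otimes> (H2 \<otimes> H1') via the associator.\<close>
definition A1_mul ::
  "('a, 'z1) hopf_scheme \<Rightarrow> ('b, 'z2) hopf_scheme \<Rightarrow> ('c, 'z3) hopf_scheme \<Rightarrow>
   ('b \<Rightarrow> 'a \<Rightarrow> 'a vec) \<Rightarrow> ('b \<Rightarrow> 'a \<Rightarrow> 'b vec) \<Rightarrow> ('c \<Rightarrow> 'a \<Rightarrow> complex) \<Rightarrow>
   ('c \<Rightarrow> 'b \<Rightarrow> 'c vec) \<Rightarrow>
   ('a \<times> 'b \<times> 'c) vec \<Rightarrow> ('a \<times> 'b \<times> 'c) vec \<Rightarrow> ('a \<times> 'b \<times> 'c) vec" where
  "A1_mul H1 H2 H' lt rt p ra = lin2 (\<lambda>(h, a, \<phi>) (g, b, \<psi>).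
     lin (\<lambda>(y1, y2).
            assoc_r (tens (dcp_mul H1 H2 lt rt (bv (h, a)) (bv y1))
                          (mul H' (act1 H' p ra (bv \<phi>) (bv y2)) (bv \<psi>))))
         (dcp_cop H1 H2 (bv (g, b))))"

definition act2 ::
  "('a, 'z1) hopf_scheme \<Rightarrow> ('b \<Rightarrow> 'a \<Rightarrow> 'a vec) \<Rightarrow> ('c \<Rightarrow> 'a \<Rightarrow> complex) \<Rightarrow>
   ('b \<times> 'c) vec \<Rightarrow> 'a vec \<Rightarrow> 'a vec" where
  "act2 H1 lt p = lin2 (\<lambda>(a, \<phi>) h.
     lin (\<lambda>(h1, h2). vsc (p \<phi> h2) (lin2 lt (bv a) (bv h1))) (cop H1 (bv h)))"

definition A2_mul ::
  "('a, 'z1) hopf_scheme \<Rightarrow> ('b, 'z2) hopf_scheme \<Rightarrow> ('c, 'z3) hopf_scheme \<Rightarrow>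
   ('b \<Rightarrow> 'a \<Rightarrow> 'a vec) \<Rightarrow> ('c \<Rightarrow> 'a \<Rightarrow> complex) \<Rightarrow>
   ('c \<Rightarrow> 'b \<Rightarrow> 'c vec) \<Rightarrow> ('b \<Rightarrow> ('c \<times> 'b) vec) \<Rightarrow>
   ('a \<times> 'b \<times> 'c) vec \<Rightarrow> ('a \<times> 'b \<times> 'c) vec \<Rightarrow> ('a \<times> 'b \<times> 'c) vec" where
  "A2_mul H1 H2 H' lt p ra co = lin2 (\<lambda>(h, X) (g, Y).
     lin (\<lambda>(X1, X2).
            tens (mul H1 (bv h) (act2 H1 lt p (bv X1) (bv g)))
                 (bcp_mul H2 H' ra (bv X2) (bv Y)))
         (bcp_cop H2 H' co (bv X)))"

definition hw_mul ::
  "('a, 'z1) hopf_scheme \<Rightarrow> ('c, 'z3) hopf_scheme \<Rightarrow> ('c \<Rightarrow> 'a \<Rightarrow> complex) \<Rightarrow>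
   ('a \<times> 'c) vec \<Rightarrow> ('a \<times> 'c) vec \<Rightarrow> ('a \<times> 'c) vec" where
  "hw_mul H1 H' p = lin2 (\<lambda>(h, \<phi>) (g, \<psi>).
     lin (\<lambda>((g1, g2), (\<phi>1, \<phi>2)).
            vsc (p \<phi>1 g2) (tens (mul H1 (bv h) (bv g1)) (mul H' (bv \<phi>2) (bv \<psi>))))
         (tens (cop H1 (bv g)) (cop H' (bv \<phi>))))"

definition emb_dcp :: "('c, 'z3) hopf_scheme \<Rightarrow> ('a \<times> 'b) vec \<Rightarrow> ('a \<times> 'b \<times> 'c) vec" where
  "emb_dcp H' = lin (\<lambda>(h, a). tens (bv h) (tens (bv a) (hu H')))"

definition emb_bcp :: "('a, 'z1) hopf_scheme \<Rightarrow> ('b \<times> 'c) vec \<Rightarrow> ('a \<times> 'b \<times> 'c) vec" where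
  "emb_bcp H1 = lin (\<lambda>(a, \<phi>). tens (hu H1) (tens (bv a) (bv \<phi>)))"

definition emb_hw :: "('b, 'z2) hopf_scheme \<Rightarrow> ('a \<times> 'c) vec \<Rightarrow> ('a \<times> 'b \<times> 'c) vec" where
  "emb_hw H2 = lin (\<lambda>(h, \<phi>). tens (bv h) (tens (hu H2) (bv \<phi>)))"

end

theory Submission
  imports Defs
begin

text \<open>
  Both products are bilinear, so it suffices to compare them on basis tensors
  \<open>h \<otimes> a \<otimes> \<phi>\<close> and \<open>g \<otimes> b \<otimes> \<psi>\<close>. Expressing the right action through the coaction,
  \<open>a \<triangleleft> h = \<langle>a(0), h\<rangle> a(1)\<close>, and the pairing with a product through the coproduct of \<open>H1\<close>,
  both sides become the same sum over a threefold coproduct of \<open>g\<close>: in \<open>A1\<close> the factor \<open>g(1)\<close>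
  is split once more (by the double cross product), in \<open>A2\<close> the factor \<open>g(2)\<close> is (by the
  action of the bicrossproduct on \<open>H1\<close>), so coassociativity of \<open>H1\<close> identifies them.
  The subalgebra statements are counit computations; the only non-formal input is that
  nondegeneracy of the pairing transfers the unit laws of \<open>\<triangleright>\<close> to \<open>1 \<triangleleft> a = \<epsilon>(a) 1\<close> and
  \<open>\<phi> \<triangleleft> 1 = \<phi>\<close> on \<open>H1'\<close>.
\<close>

section \<open>Linear algebra on finitely supported vectors\<close>

lemma lookup_vsc [simp]: "Poly_Mapping.lookup (vsc c v) i = c * Poly_Mapping.lookup v i"
  unfolding vsc_def by (simp add: map.rep_eq when_def)

lemma lookup_bv: "Poly_Mapping.lookup (bv i) k = (if i = k then 1 else 0)"
  unfolding bv_def by (simp add: lookup_single when_def)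

lemma sum_keys_superset:
  assumes "finite S" "Poly_Mapping.keys v \<subseteq> S"
  shows "(\<Sum>i\<in>Poly_Mapping.keys (v::'i vec). Poly_Mapping.lookup v i * c i) =
         (\<Sum>i\<in>S. Poly_Mapping.lookup v i * c i)"
  by (rule sum.mono_neutral_left) (use assms in \<open>auto simp: in_keys_iff\<close>)

lemma sum_keys_delta:
  "(\<Sum>m\<in>Poly_Mapping.keys (x::'i vec). Poly_Mapping.lookup x m * (if m = k then c else 0)) =
   Poly_Mapping.lookup x k * c"
proof -
  have "(\<Sum>m\<in>Poly_Mapping.keys x. Poly_Mapping.lookup x m * (if m = k then c else 0)) =
        (\<Sum>m\<in>Poly_Mapping.keys x. if m = k then Poly_Mapping.lookup x m * c else 0)"
    by (rule sum.cong) auto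
  then show ?thesis by (simp add: sum.delta in_keys_iff)
qed

lemma lookup_lin:
  "Poly_Mapping.lookup (lin f v) k =
   (\<Sum>i\<in>Poly_Mapping.keys v. Poly_Mapping.lookup v i * Poly_Mapping.lookup (f i) k)"
  unfolding lin_def by (simp add: lookup_sum)

lemma lookup_lin_superset:
  assumes "finite S" "Poly_Mapping.keys v \<subseteq> S"
  shows "Poly_Mapping.lookup (lin f v) k = (\<Sum>i\<in>S. Poly_Mapping.lookup v i * Poly_Mapping.lookup (f i) k)"
  unfolding lookup_lin by (rule sum_keys_superset[OF assms])

lemma lin_add: "lin f (u + v) = lin f u + lin f v"
proof (rule poly_mapping_eqI)
  fix k
  let ?S = "Poly_Mapping.keys u \<union> Poly_Mapping.keys v \<union> Poly_Mapping.keys (u + v)"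
  show "Poly_Mapping.lookup (lin f (u + v)) k = Poly_Mapping.lookup (lin f u + lin f v) k"
    unfolding lookup_add
    by (subst (1 2 3) lookup_lin_superset[of ?S]) (auto simp: lookup_add algebra_simps sum.distrib)
qed

lemma lin_vsc: "lin f (vsc c v) = vsc c (lin f v)"
proof (rule poly_mapping_eqI)
  fix k
  let ?S = "Poly_Mapping.keys v \<union> Poly_Mapping.keys (vsc c v)"
  show "Poly_Mapping.lookup (lin f (vsc c v)) k = Poly_Mapping.lookup (vsc c (lin f v)) k"
    unfolding lookup_vsc
    by (subst (1 2) lookup_lin_superset[of ?S]) (auto simp: sum_distrib_left algebra_simps)
qed

lemma lin_zero [simp]: "lin f 0 = 0"
  unfolding lin_def by simp

lemma lin_bv [simp]: "lin f (bv i) = f i"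
  by (rule poly_mapping_eqI) (subst lookup_lin_superset[of "{i}"], auto simp: lookup_bv bv_def)

lemma lin_bv_self: "lin bv v = v"
proof (rule poly_mapping_eqI)
  fix k
  show "Poly_Mapping.lookup (lin bv v) k = Poly_Mapping.lookup v k"
    unfolding lookup_lin lookup_bv by (simp add: sum_keys_delta[where c = 1, simplified] eq_commute)
qed

lemma vsc_add: "vsc c (u + v) = vsc c u + vsc c v"
  by (rule poly_mapping_eqI) (simp add: lookup_add algebra_simps)

lemma vsc_vsc [simp]: "vsc c (vsc d u) = vsc (c * d) u"
  by (rule poly_mapping_eqI) (simp add: algebra_simps)

lemma vsc_zero [simp]: "vsc 0 u = 0" "vsc c 0 = 0"
  by (rule poly_mapping_eqI, simp)+

lemma vsc_lin: "vsc c (lin F u) = lin (\<lambda>i. vsc c (F i)) u"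
  by (rule poly_mapping_eqI) (simp add: lookup_lin sum_distrib_left algebra_simps)

lemma lin_add_fun: "lin (\<lambda>i. f i + g i) w = lin f w + lin g w"
  by (rule poly_mapping_eqI) (simp add: lookup_lin lookup_add sum.distrib algebra_simps)

lemma lin_lfun_vsc: "lin (\<lambda>j. vsc (f j) X) W = vsc (lfun f W) X"
  by (rule poly_mapping_eqI) (simp add: lookup_lin lfun_def sum_distrib_left algebra_simps)

lemma lin_swap: "lin (\<lambda>i. lin (\<lambda>j. f i j) v) u = lin (\<lambda>j. lin (\<lambda>i. f i j) u) v"
  by (rule poly_mapping_eqI)
     (simp add: lookup_lin sum_distrib_left sum.swap[of _ "Poly_Mapping.keys u"] algebra_simps)

definition lin_map :: "('i vec \<Rightarrow> 'j vec) \<Rightarrow> bool" where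
  "lin_map g \<longleftrightarrow> (\<forall>u v. g (u + v) = g u + g v) \<and> (\<forall>c u. g (vsc c u) = vsc c (g u))"

lemma lin_map_lin [simp]: "lin_map (lin f)"
  unfolding lin_map_def by (simp add: lin_add lin_vsc)

lemma lin_map_vsc: "lin_map g \<Longrightarrow> g (vsc c u) = vsc c (g u)"
  unfolding lin_map_def by auto

lemma lin_map_zero: "lin_map g \<Longrightarrow> g 0 = 0"
  unfolding lin_map_def by (metis vsc_zero(1))

lemma lin_map_sum: "lin_map g \<Longrightarrow> g (sum f S) = (\<Sum>i\<in>S. g (f i))"
  by (induction S rule: infinite_finite_induct) (auto simp: lin_map_zero lin_map_def)

lemma lin_map_eq_lin:
  assumes "lin_map g" shows "g v = lin (\<lambda>i. g (bv i)) v"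
proof -
  have "g v = g (lin bv v)" by (simp add: lin_bv_self)
  also have "\<dots> = lin (\<lambda>i. g (bv i)) v"
    unfolding lin_def using assms by (simp add: lin_map_sum lin_map_vsc)
  finally show ?thesis .
qed

lemma lin_map_eqI:
  assumes "lin_map f" "lin_map g" "\<And>i. f (bv i) = g (bv i)"
  shows "f v = g v"
  by (simp add: lin_map_eq_lin[OF assms(1), of v] lin_map_eq_lin[OF assms(2), of v] assms(3))

lemma lin_map_comp: "lin_map g \<Longrightarrow> lin_map f \<Longrightarrow> lin_map (\<lambda>x. g (f x))"
  unfolding lin_map_def by simp

lemma lin_map_lin_comm: "lin_map g \<Longrightarrow> g (lin F u) = lin (\<lambda>i. g (F i)) u"
  using lin_map_eq_lin[OF lin_map_comp[OF _ lin_map_lin], of g F u] by simp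

lemma lin_lin: "lin g (lin f v) = lin (\<lambda>i. lin g (f i)) v"
  by (rule lin_map_lin_comm[OF lin_map_lin])

lemma lin_map_id: "lin_map (\<lambda>x. x)"
  unfolding lin_map_def by simp

lemma lin_map_lin_comp: "lin_map f \<Longrightarrow> lin_map (\<lambda>x. lin F (f x))"
  by (rule lin_map_comp[OF lin_map_lin])

lemma lin_map_vsc_comp: "lin_map f \<Longrightarrow> lin_map (\<lambda>x. vsc c (f x))"
  unfolding lin_map_def by (simp add: vsc_add mult.commute)

lemma lin_map_lin_param:
  assumes "\<And>i. lin_map (G i)" shows "lin_map (\<lambda>x. lin (\<lambda>i. G i x) w)"
  using assms unfolding lin_map_def by (simp add: lin_add_fun vsc_lin)

lemma bilinear_eqI:
  assumes "\<And>y. lin_map (\<lambda>x. f x y)" "\<And>x. lin_map (\<lambda>y. f x y)"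
    and "\<And>y. lin_map (\<lambda>x. g x y)" "\<And>x. lin_map (\<lambda>y. g x y)"
    and "\<And>i j. f (bv i) (bv j) = g (bv i) (bv j)"
  shows "f u v = g u v"
proof -
  have "f (bv i) v = g (bv i) v" for i
    by (rule lin_map_eqI[OF assms(2,4)]) (rule assms(5))
  then show ?thesis by (rule lin_map_eqI[OF assms(1,3)])
qed

lemma lfun_superset:
  assumes "finite S" "Poly_Mapping.keys v \<subseteq> S"
  shows "lfun f v = (\<Sum>i\<in>S. Poly_Mapping.lookup v i * f i)"
  unfolding lfun_def by (rule sum_keys_superset[OF assms])

lemma lfun_bv [simp]: "lfun f (bv i) = f i"
  by (subst lfun_superset[of "{i}"]) (auto simp: lookup_bv bv_def)

lemma lfun_vsc [simp]: "lfun f (vsc c v) = c * lfun f v"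
  by (subst (1 2) lfun_superset[of "Poly_Mapping.keys v \<union> Poly_Mapping.keys (vsc c v)"])
     (auto simp: sum_distrib_left algebra_simps)

lemma lfun_diff: "lfun f (u - v) = lfun f u - lfun f v"
  by (subst (1 2 3) lfun_superset[of "Poly_Mapping.keys u \<union> Poly_Mapping.keys v \<union> Poly_Mapping.keys (u - v)"])
     (auto simp: lookup_minus algebra_simps sum_subtractf)

lemma lfun_lin: "lfun f (lin G v) = lfun (\<lambda>i. lfun f (G i)) v"
proof -
  let ?S = "Poly_Mapping.keys (lin G v) \<union> (\<Union>i\<in>Poly_Mapping.keys v. Poly_Mapping.keys (G i))"
  have "lfun f (lin G v) = (\<Sum>j\<in>?S. Poly_Mapping.lookup (lin G v) j * f j)"
    by (rule lfun_superset) auto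
  also have "\<dots> = (\<Sum>i\<in>Poly_Mapping.keys v. Poly_Mapping.lookup v i *
                    (\<Sum>j\<in>?S. Poly_Mapping.lookup (G i) j * f j))"
    by (simp add: lookup_lin sum_distrib_left sum_distrib_right sum.swap[of _ ?S] mult.assoc)
  also have "\<dots> = (\<Sum>i\<in>Poly_Mapping.keys v. Poly_Mapping.lookup v i * lfun f (G i))"
    by (rule sum.cong[OF refl]) (subst lfun_superset[of ?S], auto)
  finally show ?thesis unfolding lfun_def .
qed

lemma lfun_cmult: "lfun (\<lambda>i. c * f i) u = c * lfun f u"
  by (simp add: lfun_def sum_distrib_left algebra_simps)

lemma lin2_bv1 [simp]: "lin2 f (bv i) v = lin (f i) v"
  unfolding lin2_def by simp

lemma lin2_bv2 [simp]: "lin2 f u (bv j) = lin (\<lambda>i. f i j) u"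
  unfolding lin2_def by (simp add: lin_swap)

lemma lin2_swap: "lin2 f u v = lin (\<lambda>j. lin (\<lambda>i. f i j) u) v"
  unfolding lin2_def by (rule lin_swap)

lemma lin_map_lin2_left: "lin_map f \<Longrightarrow> lin_map (\<lambda>x. lin2 g (f x) y)"
  unfolding lin2_def by (rule lin_map_lin_comp)

lemma lin_map_lin2_right: "lin_map f \<Longrightarrow> lin_map (\<lambda>x. lin2 g y (f x))"
  unfolding lin2_swap by (rule lin_map_lin_comp)

lemma tens_bv [simp]: "tens (bv i) (bv j) = bv (i, j)"
  unfolding tens_def by simp

lemma tens_bv_left: "tens (bv i) v = lin (\<lambda>j. bv (i, j)) v"
  unfolding tens_def by simp

lemma lin_tens: "lin F (tens u v) = lin (\<lambda>i. lin (\<lambda>j. F (i, j)) v) u"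
  unfolding tens_def lin2_def by (simp add: lin_lin)

lemma lfun_tens: "lfun f (tens u v) = lfun (\<lambda>i. lfun (\<lambda>j. f (i, j)) v) u"
  unfolding tens_def lin2_def by (simp add: lfun_lin)

lemma lookup_tens:
  "Poly_Mapping.lookup (tens X Y) (i, j) = Poly_Mapping.lookup X i * Poly_Mapping.lookup Y j"
proof -
  have "Poly_Mapping.lookup (lin (\<lambda>b. bv (a, b)) Y) (i, j) = (if a = i then Poly_Mapping.lookup Y j else 0)" for a
    unfolding lookup_lin lookup_bv using sum_keys_delta[of Y j 1]
    by (cases "a = i") (simp_all add: eq_commute)
  then show ?thesis
    unfolding tens_def lin2_def lookup_lin[of _ X] by (simp add: sum_keys_delta)
qed

lemma lin_map_tens_left: "lin_map f \<Longrightarrow> lin_map (\<lambda>x. tens (f x) y)"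
  unfolding tens_def by (rule lin_map_lin2_left)

lemma lin_map_tens_right: "lin_map f \<Longrightarrow> lin_map (\<lambda>x. tens y (f x))"
  unfolding tens_def by (rule lin_map_lin2_right)

lemma lin_tens_bilinear:
  assumes "\<And>y. lin_map (\<lambda>x. B x y)" "\<And>x. lin_map (\<lambda>y. B x y)"
  shows "lin (\<lambda>(i, j). B (bv i) (bv j)) (tens u v) = B u v"
  by (simp add: lin_tens lin_map_eq_lin[OF assms(2), symmetric] lin_map_eq_lin[OF assms(1), symmetric])

lemma assoc_r_tens [simp]: "assoc_r (tens (tens x y) z) = tens x (tens y z)"
  unfolding assoc_r_def tens_def lin2_def by (simp add: lin_lin)

lemma lookup_assoc_r: "Poly_Mapping.lookup (assoc_r W) (i, j, k) = Poly_Mapping.lookup W ((i, j), k)"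
proof -
  have "Poly_Mapping.lookup (assoc_r W) (i, j, k) =
        (\<Sum>m\<in>Poly_Mapping.keys W. Poly_Mapping.lookup W m * (if m = ((i, j), k) then 1 else 0))"
    unfolding assoc_r_def lookup_lin
    by (rule sum.cong) (auto simp: case_prod_unfold prod_eq_iff lookup_bv)
  then show ?thesis by (simp only: sum_keys_delta) simp
qed

lemma assoc_r_bv [simp]: "assoc_r (bv ((i, j), k)) = bv (i, j, k)"
  unfolding assoc_r_def by simp

lemma lin_map_assoc_r: "lin_map f \<Longrightarrow> lin_map (\<lambda>x. assoc_r (f x))"
  unfolding assoc_r_def by (rule lin_map_lin_comp)

section \<open>Hopf algebras, pairings and matched pairs\<close>

lemma cop_bv [simp]: "cop H (bv i) = hc H i"
  unfolding cop_def by simp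

lemma eps_bv [simp]: "eps H (bv i) = he H i"
  unfolding eps_def by simp

lemma hopf_unit_mul: "hopf_algebra H \<Longrightarrow> mul H (hu H) x = x"
  unfolding hopf_algebra_def by blast

lemma hopf_cop_unit: "hopf_algebra H \<Longrightarrow> cop H (hu H) = tens (hu H) (hu H)"
  unfolding hopf_algebra_def by blast

lemma hopf_eps_mul: "hopf_algebra H \<Longrightarrow> eps H (mul H x y) = eps H x * eps H y"
  unfolding hopf_algebra_def by blast

lemma hopf_counit_left:
  assumes "hopf_algebra H"
  shows "lin (\<lambda>j. vsc (he H (fst j)) (F (snd j))) (hc H x) = F x"
proof -
  have "lin (\<lambda>(a, b). vsc (he H a) (bv b)) (cop H (bv x)) = bv x"
    using assms unfolding hopf_algebra_def by blast
  then have "lin F (lin (\<lambda>(a, b). vsc (he H a) (bv b)) (cop H (bv x))) = F x" by simp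
  then show ?thesis by (simp add: lin_lin lin_vsc case_prod_unfold)
qed

lemma hopf_counit_right:
  assumes "hopf_algebra H"
  shows "lin (\<lambda>j. vsc (he H (snd j)) (F (fst j))) (hc H x) = F x"
proof -
  have "lin (\<lambda>(a, b). vsc (he H b) (bv a)) (cop H (bv x)) = bv x"
    using assms unfolding hopf_algebra_def by blast
  then have "lin F (lin (\<lambda>(a, b). vsc (he H b) (bv a)) (cop H (bv x))) = F x" by simp
  then show ?thesis by (simp add: lin_lin lin_vsc case_prod_unfold)
qed

lemma hopf_coassoc_lin:
  assumes "hopf_algebra H"
  shows "lin (\<lambda>i. lin (\<lambda>j. F (fst j) (snd j) (snd i)) (hc H (fst i))) (hc H g) =
         lin (\<lambda>i. lin (\<lambda>j. F (fst i) (fst j) (snd j)) (hc H (snd i))) (hc H g)"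
proof -
  have "assoc_r (tmap (cop H) id (cop H (bv g))) = tmap id (cop H) (cop H (bv g))"
    using assms unfolding hopf_algebra_def by blast
  then have "lin (\<lambda>(x, y, z). F x y z) (assoc_r (tmap (cop H) id (cop H (bv g)))) =
             lin (\<lambda>(x, y, z). F x y z) (tmap id (cop H) (cop H (bv g)))" by simp
  then show ?thesis
    unfolding assoc_r_def tmap_def by (simp add: lin_lin lin_tens case_prod_unfold)
qed

lemma hopf_unit_nonzero:
  fixes H :: "('i, 'z) hopf_scheme"
  assumes "hopf_algebra H" shows "\<exists>k. Poly_Mapping.lookup (hu H) k \<noteq> 0"
proof (rule ccontr)
  assume "\<not> ?thesis"
  then have "hu H = 0" by (intro poly_mapping_eqI) simp
  then have "bv i = (0 :: 'i vec)" for i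
    using hopf_unit_mul[OF assms, of "bv i"] unfolding mul_def lin2_def by simp
  then show False by (metis lookup_bv lookup_zero zero_neq_one)
qed

lemma coaction_counit:
  assumes counit: "\<forall>a. lin (\<lambda>(c, b). vsc (he H' c) (bv b)) (lin co a) = a"
  shows "lin (\<lambda>k. vsc (he H' (fst k)) (F (snd k))) (co x) = F x"
proof -
  have "lin (\<lambda>(c, b). vsc (he H' c) (bv b)) (co x) = bv x"
    using counit[rule_format, of "bv x"] by simp
  then have "lin F (lin (\<lambda>(c, b). vsc (he H' c) (bv b)) (co x)) = F x" by simp
  then show ?thesis by (simp add: lin_lin lin_vsc case_prod_unfold)
qed

lemma pair_bv [simp]: "pair p (bv c) h = lfun (p c) h"
  unfolding pair_def by simp

lemma pair_vsc_left: "pair p (vsc c u) h = c * pair p u h"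
  unfolding pair_def by simp

lemma nondegenerate_eqI:
  assumes "nondegenerate p" "\<And>h. pair p x h = pair p y h"
  shows "x = y"
proof -
  have "pair p (x - y) h = 0" for h
    using assms(2)[of h] unfolding pair_def by (simp add: lfun_diff)
  then have "x - y = 0" using assms(1) unfolding nondegenerate_def by blast
  then show ?thesis by simp
qed

lemma dual_pairing_unit_left: "dual_pairing H' H p \<Longrightarrow> pair p (hu H') h = eps H h"
  unfolding dual_pairing_def by blast

lemma dual_pairing_unit_right: "dual_pairing H' H p \<Longrightarrow> pair p \<phi> (hu H) = eps H' \<phi>"
  unfolding dual_pairing_def by blast

lemma dual_pairing_mul_left:
  "dual_pairing H' H p \<Longrightarrow> pair p (mul H' \<phi> \<psi>) h = pairT p (tens \<phi> \<psi>) (cop H h)"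
  unfolding dual_pairing_def by blast

lemma matched_pair_eps_lt:
  "matched_pair H1 H2 lt rt \<Longrightarrow> eps H1 (lin2 lt a h) = eps H2 a * eps H1 h"
  unfolding matched_pair_def Let_def by (elim conjE) (simp only:)

lemma matched_pair_lt_unit_left: "matched_pair H1 H2 lt rt \<Longrightarrow> lin2 lt (hu H2) h = h"
  unfolding matched_pair_def Let_def by (elim conjE) (simp only:)

lemma matched_pair_lt_unit_right:
  "matched_pair H1 H2 lt rt \<Longrightarrow> lin2 lt a (hu H1) = vsc (eps H2 a) (hu H1)"
  unfolding matched_pair_def Let_def by (elim conjE) (simp only:)

lemma matched_pair_rt_unit_left:
  "matched_pair H1 H2 lt rt \<Longrightarrow> lin2 rt (hu H2) h = vsc (eps H1 h) (hu H2)"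
  unfolding matched_pair_def Let_def by (elim conjE) (simp only:)

lemma dual_act_unit_left:
  assumes mp: "matched_pair H1 H2 lt rt" and dp: "dual_pairing H' H1 p" and nd: "nondegenerate p"
    and ra_dual: "\<forall>\<phi> a h. pair p (lin2 ra \<phi> a) h = pair p \<phi> (lin2 lt a h)"
  shows "lin2 ra (hu H') b = vsc (eps H2 b) (hu H')"
proof (rule nondegenerate_eqI[OF nd])
  fix h
  have "pair p (lin2 ra (hu H') b) h = eps H1 (lin2 lt b h)"
    using ra_dual dual_pairing_unit_left[OF dp] by simp
  also have "\<dots> = pair p (vsc (eps H2 b) (hu H')) h"
    by (simp add: matched_pair_eps_lt[OF mp] pair_vsc_left dual_pairing_unit_left[OF dp])
  finally show "pair p (lin2 ra (hu H') b) h = pair p (vsc (eps H2 b) (hu H')) h" .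
qed

lemma dual_act_unit_right:
  assumes mp: "matched_pair H1 H2 lt rt" and nd: "nondegenerate p"
    and ra_dual: "\<forall>\<phi> a h. pair p (lin2 ra \<phi> a) h = pair p \<phi> (lin2 lt a h)"
  shows "lin2 ra \<phi> (hu H2) = \<phi>"
  by (rule nondegenerate_eqI[OF nd]) (simp add: ra_dual matched_pair_lt_unit_left[OF mp])

lemma lin_map_mul_left: "lin_map f \<Longrightarrow> lin_map (\<lambda>x. mul H (f x) y)"
  unfolding mul_def by (rule lin_map_lin2_left)

lemma lin_map_mul_right: "lin_map f \<Longrightarrow> lin_map (\<lambda>x. mul H y (f x))"
  unfolding mul_def by (rule lin_map_lin2_right)

lemma lin_map_cop: "lin_map f \<Longrightarrow> lin_map (\<lambda>x. cop H (f x))"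
  unfolding cop_def by (rule lin_map_lin_comp)

lemma lin_map_dcp_mul_left: "lin_map f \<Longrightarrow> lin_map (\<lambda>x. dcp_mul H1 H2 lt rt (f x) y)"
  unfolding dcp_mul_def by (rule lin_map_lin2_left)

lemma lin_map_dcp_mul_right: "lin_map f \<Longrightarrow> lin_map (\<lambda>x. dcp_mul H1 H2 lt rt y (f x))"
  unfolding dcp_mul_def by (rule lin_map_lin2_right)

lemma lin_map_dcp_cop: "lin_map f \<Longrightarrow> lin_map (\<lambda>x. dcp_cop H1 H2 (f x))"
  unfolding dcp_cop_def by (rule lin_map_lin_comp)

lemma lin_map_bcp_cop: "lin_map f \<Longrightarrow> lin_map (\<lambda>x. bcp_cop H2 H' co (f x))"
  unfolding bcp_cop_def by (rule lin_map_lin_comp)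

lemma lin_map_bcp_mul_left: "lin_map f \<Longrightarrow> lin_map (\<lambda>x. bcp_mul H2 H' ra (f x) y)"
  unfolding bcp_mul_def by (rule lin_map_lin2_left)

lemma lin_map_bcp_mul_right: "lin_map f \<Longrightarrow> lin_map (\<lambda>x. bcp_mul H2 H' ra y (f x))"
  unfolding bcp_mul_def by (rule lin_map_lin2_right)

lemma lin_map_act1_left: "lin_map f \<Longrightarrow> lin_map (\<lambda>x. act1 H' p ra (f x) y)"
  unfolding act1_def by (rule lin_map_lin2_left)

lemma lin_map_act1_right: "lin_map f \<Longrightarrow> lin_map (\<lambda>x. act1 H' p ra y (f x))"
  unfolding act1_def by (rule lin_map_lin2_right)

lemma lin_map_act2_left: "lin_map f \<Longrightarrow> lin_map (\<lambda>x. act2 H1 lt p (f x) y)"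
  unfolding act2_def by (rule lin_map_lin2_left)

lemma lin_map_act2_right: "lin_map f \<Longrightarrow> lin_map (\<lambda>x. act2 H1 lt p y (f x))"
  unfolding act2_def by (rule lin_map_lin2_right)

lemma lin_map_A1_mul_left: "lin_map f \<Longrightarrow> lin_map (\<lambda>x. A1_mul H1 H2 H' lt rt p ra (f x) y)"
  unfolding A1_mul_def by (rule lin_map_lin2_left)

lemma lin_map_A1_mul_right: "lin_map f \<Longrightarrow> lin_map (\<lambda>x. A1_mul H1 H2 H' lt rt p ra y (f x))"
  unfolding A1_mul_def by (rule lin_map_lin2_right)

lemma lin_map_A2_mul_left: "lin_map f \<Longrightarrow> lin_map (\<lambda>x. A2_mul H1 H2 H' lt p ra co (f x) y)"
  unfolding A2_mul_def by (rule lin_map_lin2_left)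

lemma lin_map_A2_mul_right: "lin_map f \<Longrightarrow> lin_map (\<lambda>x. A2_mul H1 H2 H' lt p ra co y (f x))"
  unfolding A2_mul_def by (rule lin_map_lin2_right)

lemma lin_map_hw_mul_left: "lin_map f \<Longrightarrow> lin_map (\<lambda>x. hw_mul H1 H' p (f x) y)"
  unfolding hw_mul_def by (rule lin_map_lin2_left)

lemma lin_map_hw_mul_right: "lin_map f \<Longrightarrow> lin_map (\<lambda>x. hw_mul H1 H' p y (f x))"
  unfolding hw_mul_def by (rule lin_map_lin2_right)

lemma lin_map_emb_dcp: "lin_map f \<Longrightarrow> lin_map (\<lambda>x. emb_dcp H' (f x))"
  unfolding emb_dcp_def by (rule lin_map_lin_comp)

lemma lin_map_emb_bcp: "lin_map f \<Longrightarrow> lin_map (\<lambda>x. emb_bcp H1 (f x))"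
  unfolding emb_bcp_def by (rule lin_map_lin_comp)

lemma lin_map_emb_hw: "lin_map f \<Longrightarrow> lin_map (\<lambda>x. emb_hw H2 (f x))"
  unfolding emb_hw_def by (rule lin_map_lin_comp)

lemmas lin_map_intros = lin_map_id lin_map_vsc_comp lin_map_lin_param lin_map_lin_comp lin_map_assoc_r
  lin_map_lin2_left lin_map_lin2_right lin_map_tens_left lin_map_tens_right
  lin_map_mul_left lin_map_mul_right lin_map_cop
  lin_map_dcp_mul_left lin_map_dcp_mul_right lin_map_dcp_cop
  lin_map_bcp_cop lin_map_bcp_mul_left lin_map_bcp_mul_right
  lin_map_act1_left lin_map_act1_right lin_map_act2_left lin_map_act2_right
  lin_map_A1_mul_left lin_map_A1_mul_right lin_map_A2_mul_left lin_map_A2_mul_right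
  lin_map_hw_mul_left lin_map_hw_mul_right lin_map_emb_dcp lin_map_emb_bcp lin_map_emb_hw

lemmas lin_map_ops = lin_map_intros(5-)[OF lin_map_id] lin_map_lin

lemmas lin_comm_simps =
  lin_map_ops[THEN lin_map_lin_comm] lin_map_ops[THEN lin_map_vsc] vsc_lin lfun_lin lfun_vsc

lemma dcp_mul_bv:
  "dcp_mul H1 H2 lt rt (bv (h, a)) (bv (g, b)) =
   lin (\<lambda>(a1, a2). lin (\<lambda>(g1, g2).
      tens (mul H1 (bv h) (lt a1 g1)) (mul H2 (rt a2 g2) (bv b))) (hc H1 g)) (hc H2 a)"
  unfolding dcp_mul_def by (simp add: lin_tens case_prod_unfold)

lemma dcp_cop_bv:
  "dcp_cop H1 H2 (bv (g, b)) =
   lin (\<lambda>(g1, g2). lin (\<lambda>(b1, b2). bv ((g1, b1), (g2, b2))) (hc H2 b)) (hc H1 g)"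
  unfolding dcp_cop_def by (simp add: lin_tens case_prod_unfold)

lemma act1_bv:
  "act1 H' p ra (bv \<phi>) (bv (g, b)) = lin (\<lambda>(\<phi>1, \<phi>2). vsc (p \<phi>1 g) (ra \<phi>2 b)) (hc H' \<phi>)"
  unfolding act1_def by (simp add: case_prod_unfold)

lemma A1_mul_bv:
  "A1_mul H1 H2 H' lt rt p ra (bv (h, a, \<phi>)) (bv (g, b, \<psi>)) =
   lin (\<lambda>(y1, y2). assoc_r (tens (dcp_mul H1 H2 lt rt (bv (h, a)) (bv y1))
                                 (mul H' (act1 H' p ra (bv \<phi>) (bv y2)) (bv \<psi>))))
       (dcp_cop H1 H2 (bv (g, b)))"
  unfolding A1_mul_def by (simp add: case_prod_unfold)

lemma bcp_mul_bv:
  "bcp_mul H2 H' ra (bv (a, \<phi>)) (bv (b, \<psi>)) =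
   lin (\<lambda>(b1, b2). tens (mul H2 (bv a) (bv b1)) (mul H' (ra \<phi> b2) (bv \<psi>))) (hc H2 b)"
  unfolding bcp_mul_def by (simp add: case_prod_unfold)

lemma bcp_cop_bv:
  "bcp_cop H2 H' co (bv (a, \<phi>)) =
   lin (\<lambda>(a1, a2). lin (\<lambda>(\<phi>1, \<phi>2). lin (\<lambda>(c, a').
      tens (tens (bv a1) (mul H' (bv c) (bv \<phi>1))) (tens (bv a') (bv \<phi>2))) (co a2)) (hc H' \<phi>)) (hc H2 a)"
  unfolding bcp_cop_def by (simp only: lin_bv lin_tens case_prod_unfold fst_conv snd_conv cop_bv)

lemma act2_tens_bv:
  "act2 H1 lt p (tens (bv a) W) (bv g) =
   lin (\<lambda>(g1, g2). vsc (pair p W (bv g2)) (lt a g1)) (hc H1 g)"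
proof -
  have "act2 H1 lt p (tens (bv a) W) (bv g) = lin (\<lambda>j. act2 H1 lt p (bv (a, j)) (bv g)) W"
    unfolding tens_bv_left by (rule lin_map_lin_comm[OF lin_map_act2_left[OF lin_map_id]])
  also have "\<dots> = lin (\<lambda>j. lin (\<lambda>i. vsc (p j (snd i)) (lt a (fst i))) (hc H1 g)) W"
    unfolding act2_def by (simp add: case_prod_unfold)
  also have "\<dots> = lin (\<lambda>(g1, g2). vsc (pair p W (bv g2)) (lt a g1)) (hc H1 g)"
    by (subst lin_swap) (simp add: lin_lfun_vsc case_prod_unfold pair_def)
  finally show ?thesis .
qed

lemma A2_mul_bv:
  "A2_mul H1 H2 H' lt p ra co (bv (h, a, \<phi>)) (bv (g, b, \<psi>)) =
   lin (\<lambda>(a1, a2). lin (\<lambda>(\<phi>1, \<phi>2). lin (\<lambda>(c, a').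
      tens (mul H1 (bv h) (act2 H1 lt p (tens (bv a1) (mul H' (bv c) (bv \<phi>1))) (bv g)))
           (bcp_mul H2 H' ra (bv (a', \<phi>2)) (bv (b, \<psi>)))) (co a2)) (hc H' \<phi>)) (hc H2 a)"
proof -
  let ?B = "\<lambda>U V. tens (mul H1 (bv h) (act2 H1 lt p U (bv g))) (bcp_mul H2 H' ra V (bv (b, \<psi>)))"
  have "lin_map (\<lambda>U. ?B U V)" "lin_map (\<lambda>V. ?B U V)" for U V
    by (intro lin_map_intros)+
  then have "lin (\<lambda>(i, j). ?B (bv i) (bv j)) (tens U V) = ?B U V" for U V
    by (rule lin_tens_bilinear)
  then show ?thesis
    unfolding A2_mul_def by (simp add: bcp_cop_bv lin_lin case_prod_unfold)
qed

lemma A1_mul_assoc_r_tens: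
  "A1_mul H1 H2 H' lt rt p ra (assoc_r (tens X U)) (assoc_r (tens Y V)) =
   lin (\<lambda>y. assoc_r (tens (dcp_mul H1 H2 lt rt X (bv (fst y))) (mul H' (act1 H' p ra U (bv (snd y))) V)))
       (dcp_cop H1 H2 Y)"
proof -
  have basis: "A1_mul H1 H2 H' lt rt p ra (assoc_r (tens (bv i) U)) (assoc_r (tens (bv j) V)) =
        lin (\<lambda>y. assoc_r (tens (dcp_mul H1 H2 lt rt (bv i) (bv (fst y)))
                                (mul H' (act1 H' p ra U (bv (snd y))) V)))
            (dcp_cop H1 H2 (bv j))" for i j
  proof (rule bilinear_eqI[where u = U and v = V])
    fix k l
    obtain h a g b where "i = (h, a)" "j = (g, b)" by fastforce
    then show "A1_mul H1 H2 H' lt rt p ra (assoc_r (tens (bv i) (bv k))) (assoc_r (tens (bv j) (bv l))) =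
               lin (\<lambda>y. assoc_r (tens (dcp_mul H1 H2 lt rt (bv i) (bv (fst y)))
                                       (mul H' (act1 H' p ra (bv k) (bv (snd y))) (bv l))))
                   (dcp_cop H1 H2 (bv j))"
      by (simp add: A1_mul_bv case_prod_unfold)
  qed (intro lin_map_intros)+
  show ?thesis
    by (rule bilinear_eqI[where f = "\<lambda>X Y. A1_mul H1 H2 H' lt rt p ra (assoc_r (tens X U)) (assoc_r (tens Y V))"])
       (intro lin_map_intros basis)+
qed

lemma A2_mul_tens:
  "A2_mul H1 H2 H' lt p ra co (tens U X) (tens V Y) =
   lin (\<lambda>z. tens (mul H1 U (act2 H1 lt p (bv (fst z)) V)) (bcp_mul H2 H' ra (bv (snd z)) Y))
       (bcp_cop H2 H' co X)"
proof -
  have basis: "A2_mul H1 H2 H' lt p ra co (tens U (bv i)) (tens V (bv j)) =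
        lin (\<lambda>z. tens (mul H1 U (act2 H1 lt p (bv (fst z)) V)) (bcp_mul H2 H' ra (bv (snd z)) (bv j)))
            (bcp_cop H2 H' co (bv i))" for i j
  proof (rule bilinear_eqI[where u = U and v = V])
    fix k l
    show "A2_mul H1 H2 H' lt p ra co (tens (bv k) (bv i)) (tens (bv l) (bv j)) =
          lin (\<lambda>z. tens (mul H1 (bv k) (act2 H1 lt p (bv (fst z)) (bv l))) (bcp_mul H2 H' ra (bv (snd z)) (bv j)))
              (bcp_cop H2 H' co (bv i))"
      by (simp add: A2_mul_def case_prod_unfold)
  qed (intro lin_map_intros)+
  show ?thesis
    by (rule bilinear_eqI[where f = "\<lambda>X Y. A2_mul H1 H2 H' lt p ra co (tens U X) (tens V Y)"])
       (intro lin_map_intros basis)+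
qed

lemma act1_tens_bv:
  "act1 H' p ra (bv \<phi>) (tens (bv g) V) = lin (\<lambda>k. vsc (p (fst k) g) (lin2 ra (bv (snd k)) V)) (hc H' \<phi>)"
proof (rule lin_map_eqI[where v = V])
  show "act1 H' p ra (bv \<phi>) (tens (bv g) (bv i)) =
        lin (\<lambda>k. vsc (p (fst k) g) (lin2 ra (bv (snd k)) (bv i))) (hc H' \<phi>)" for i
    by (simp add: act1_bv case_prod_unfold)
qed (intro lin_map_intros)+

lemma dcp_mul_tens_bv:
  "dcp_mul H1 H2 lt rt (tens (bv h) U) (tens (bv g) V) =
   lin (\<lambda>i. lin (\<lambda>j. tens (mul H1 (bv h) (lin2 lt (bv (fst i)) (bv (fst j))))
                           (mul H2 (lin2 rt (bv (snd i)) (bv (snd j))) V)) (hc H1 g)) (cop H2 U)"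
proof (rule bilinear_eqI[where f = "\<lambda>U V. dcp_mul H1 H2 lt rt (tens (bv h) U) (tens (bv g) V)"])
  show "dcp_mul H1 H2 lt rt (tens (bv h) (bv i)) (tens (bv g) (bv j)) =
        lin (\<lambda>k. lin (\<lambda>l. tens (mul H1 (bv h) (lin2 lt (bv (fst k)) (bv (fst l))))
                                (mul H2 (lin2 rt (bv (snd k)) (bv (snd l))) (bv j))) (hc H1 g)) (cop H2 (bv i))"
    for i j
    by (simp add: dcp_mul_bv case_prod_unfold)
qed (intro lin_map_intros)+

section \<open>The two products coincide\<close>

lemma A1_mul_eq_A2_mul_bv:
  fixes H1 :: "'a hopf" and H2 :: "'b hopf" and H' :: "'c hopf"
  assumes H1: "hopf_algebra H1"
    and dp: "dual_pairing H' H1 p"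
    and rt_co: "\<forall>a h. lin2 rt a h = lin (\<lambda>(c, b). vsc (pair p (bv c) h) (bv b)) (lin co a)"
  shows "A1_mul H1 H2 H' lt rt p ra (bv (h, a, \<phi>)) (bv (g, b, \<psi>)) =
         A2_mul H1 H2 H' lt p ra co (bv (h, a, \<phi>)) (bv (g, b, \<psi>))"
proof -
  have rt_bv: "rt x y = lin (\<lambda>(c, b). vsc (p c y) (bv b)) (co x)" for x y
    using rt_co[rule_format, of "bv x" "bv y"] by (simp add: case_prod_unfold)
  have pair_mul: "pair p (mul H' (bv c) (bv \<phi>')) (bv x) =
                  lfun (\<lambda>j. p c (fst j) * p \<phi>' (snd j)) (hc H1 x)" for c \<phi>' x
    using dual_pairing_mul_left[OF dp] unfolding pairT_def by (simp add: case_prod_unfold)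
  \<comment> \<open>oriented instances of \<open>lin_swap\<close>: the sums over \<open>\<Delta>g\<close> go outermost, then those over the coaction\<close>
  note sorts =
    lin_swap[where v = "hc H1 x" and u = "hc H2 b" for x] lin_swap[where v = "hc H1 x" and u = "hc H' \<phi>" for x]
    lin_swap[where v = "hc H1 x" and u = "hc H2 a" for x] lin_swap[where v = "hc H1 x" and u = "co y" for x y]
    lin_swap[where u = "co y" and v = "hc H2 b" for y] lin_swap[where u = "co y" and v = "hc H' \<phi>" for y]
    lin_swap[where u = "co y" and v = "hc H2 a" for y]
    lin_swap[where u = "hc H2 a" and v = "hc H2 b"] lin_swap[where u = "hc H2 a" and v = "hc H' \<phi>"]
    lin_swap[where u = "hc H' \<phi>" and v = "hc H2 b"]
  \<comment> \<open>the common summand, \<open>x \<otimes> y \<otimes> z\<close> being a term of the threefold coproduct of \<open>g\<close>\<close>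
  define F where "F = (\<lambda>x y z. lin (\<lambda>ib. lin (\<lambda>ic. lin (\<lambda>id. vsc (p (fst ic) z)
      (tens (mul H1 (bv h) (lt (fst id) x))
            (tens (mul H2 (rt (snd id) y) (bv (fst ib))) (mul H' (ra (snd ic) (snd ib)) (bv \<psi>)))))
      (hc H2 a)) (hc H' \<phi>)) (hc H2 b))"
  have "A1_mul H1 H2 H' lt rt p ra (bv (h, a, \<phi>)) (bv (g, b, \<psi>)) =
        lin (\<lambda>i. lin (\<lambda>j. F (fst j) (snd j) (snd i)) (hc H1 (fst i))) (hc H1 g)"
    unfolding F_def
    by (simp add: A1_mul_bv dcp_cop_bv dcp_mul_bv act1_bv lin_comm_simps case_prod_unfold sorts
             del: lfun_vsc)
  also have "\<dots> = lin (\<lambda>i. lin (\<lambda>j. F (fst i) (fst j) (snd j)) (hc H1 (snd i))) (hc H1 g)"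
    by (rule hopf_coassoc_lin[OF H1])
  also have "\<dots> = A2_mul H1 H2 H' lt p ra co (bv (h, a, \<phi>)) (bv (g, b, \<psi>))"
    unfolding F_def
    by (simp add: A2_mul_bv act2_tens_bv bcp_mul_bv lin_comm_simps case_prod_unfold sorts rt_bv pair_mul
             lin_lfun_vsc[symmetric] ac_simps del: lfun_vsc)
  finally show ?thesis .
qed

lemma A1_mul_eq_A2_mul:
  fixes H1 :: "'a hopf" and H2 :: "'b hopf" and H' :: "'c hopf"
  assumes H1: "hopf_algebra H1"
    and dp: "dual_pairing H' H1 p"
    and rt_co: "\<forall>a h. lin2 rt a h = lin (\<lambda>(c, b). vsc (pair p (bv c) h) (bv b)) (lin co a)"
  shows "A1_mul H1 H2 H' lt rt p ra u v = A2_mul H1 H2 H' lt p ra co u v"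
proof (rule bilinear_eqI[where f = "A1_mul H1 H2 H' lt rt p ra"])
  show "A1_mul H1 H2 H' lt rt p ra (bv i) (bv j) = A2_mul H1 H2 H' lt p ra co (bv i) (bv j)" for i j
    using A1_mul_eq_A2_mul_bv[OF assms] by (cases i, cases j) auto
qed (intro lin_map_intros)+

section \<open>The three subalgebras\<close>

lemma act1_unit_bv:
  assumes H': "hopf_algebra H'" and mp: "matched_pair H1 H2 lt rt"
    and dp: "dual_pairing H' H1 p" and nd: "nondegenerate p"
    and ra_dual: "\<forall>\<phi> a h. pair p (lin2 ra \<phi> a) h = pair p \<phi> (lin2 lt a h)"
  shows "act1 H' p ra (hu H') (bv (g, b)) = vsc (he H1 g * he H2 b) (hu H')"
proof -
  have "act1 H' p ra (hu H') (bv (g, b)) = lin (\<lambda>\<phi>. act1 H' p ra (bv \<phi>) (bv (g, b))) (hu H')"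
    by (rule lin_map_eq_lin) (intro lin_map_intros)
  also have "\<dots> = lin (\<lambda>j. vsc (p (fst j) g) (ra (snd j) b)) (cop H' (hu H'))"
    by (simp add: act1_bv cop_def lin_lin case_prod_unfold)
  also have "\<dots> = lin (\<lambda>j. vsc (pair p (hu H') (bv g)) (ra j b)) (hu H')"
    by (simp add: hopf_cop_unit[OF H'] lin_tens) (subst lin_swap, simp add: lin_lfun_vsc pair_def)
  also have "\<dots> = vsc (pair p (hu H') (bv g)) (lin2 ra (hu H') (bv b))"
    by (simp add: vsc_lin)
  also have "\<dots> = vsc (he H1 g * he H2 b) (hu H')"
    by (simp del: lin2_bv2 add: dual_act_unit_left[OF mp dp nd ra_dual] dual_pairing_unit_left[OF dp])
  finally show ?thesis .
qed

lemma act2_unit_bv: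
  assumes H1: "hopf_algebra H1" and mp: "matched_pair H1 H2 lt rt" and dp: "dual_pairing H' H1 p"
  shows "act2 H1 lt p (bv (a, \<phi>)) (hu H1) = vsc (he H2 a * he H' \<phi>) (hu H1)"
proof -
  have "act2 H1 lt p (bv (a, \<phi>)) (hu H1) = lin (\<lambda>h. act2 H1 lt p (bv (a, \<phi>)) (bv h)) (hu H1)"
    by (rule lin_map_eq_lin) (intro lin_map_intros)
  also have "\<dots> = lin (\<lambda>j. vsc (p \<phi> (snd j)) (lt a (fst j))) (cop H1 (hu H1))"
    by (simp add: act2_def cop_def lin_lin case_prod_unfold)
  also have "\<dots> = vsc (pair p (bv \<phi>) (hu H1)) (lin2 lt (bv a) (hu H1))"
    by (simp add: hopf_cop_unit[OF H1] lin_tens lin_lfun_vsc vsc_lin)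
  also have "\<dots> = vsc (he H2 a * he H' \<phi>) (hu H1)"
    by (simp del: pair_bv lin2_bv1
             add: matched_pair_lt_unit_right[OF mp] dual_pairing_unit_right[OF dp] mult.commute)
  finally show ?thesis .
qed

lemma dcp_counit:
  assumes "hopf_algebra H1" "hopf_algebra H2"
  shows "lin (\<lambda>y. vsc (he H1 (fst (snd y)) * he H2 (snd (snd y))) (bv (fst y))) (dcp_cop H1 H2 Y) = Y"
proof (rule lin_map_eqI[where g = "\<lambda>Y. Y"])
  show "lin (\<lambda>y. vsc (he H1 (fst (snd y)) * he H2 (snd (snd y))) (bv (fst y))) (dcp_cop H1 H2 (bv i)) = bv i"
    for i
  proof -
    obtain g b where i: "i = (g, b)" by fastforce
    have "lin (\<lambda>y. vsc (he H1 (fst (snd y)) * he H2 (snd (snd y))) (bv (fst y))) (dcp_cop H1 H2 (bv (g, b)))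
       = lin (\<lambda>i. lin (\<lambda>j. vsc (he H2 (snd j)) (vsc (he H1 (snd i)) (bv (fst i, fst j)))) (hc H2 b)) (hc H1 g)"
      by (simp add: dcp_cop_bv lin_lin case_prod_unfold mult.commute)
    \<comment> \<open>\<open>F\<close> is given explicitly since \<open>F (fst j)\<close> is no higher-order pattern for the simplifier\<close>
    also have "\<dots> = bv (g, b)"
      by (simp only: hopf_counit_right[OF assms(2), where F = "\<lambda>x. vsc c (bv (z, x))" for c z]
                     hopf_counit_right[OF assms(1), where F = "\<lambda>x. bv (x, b)"])
    finally show ?thesis unfolding i .
  qed
qed (intro lin_map_intros)+

lemma bcp_counit:
  assumes H2: "hopf_algebra H2" and H': "hopf_algebra H'"
    and counit: "\<forall>a. lin (\<lambda>(c, b). vsc (he H' c) (bv b)) (lin co a) = a"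
  shows "lin (\<lambda>z. vsc (he H2 (fst (fst z)) * he H' (snd (fst z))) (bv (snd z))) (bcp_cop H2 H' co X) = X"
proof (rule lin_map_eqI[where g = "\<lambda>X. X"])
  show "lin (\<lambda>z. vsc (he H2 (fst (fst z)) * he H' (snd (fst z))) (bv (snd z))) (bcp_cop H2 H' co (bv i)) = bv i"
    for i
  proof -
    obtain a \<phi> where i: "i = (a, \<phi>)" by fastforce
    have "lin (\<lambda>z. vsc (he H2 (fst (fst z)) * he H' (snd (fst z))) (bv (snd z))) (bcp_cop H2 H' co (bv (a, \<phi>))) =
          lin (\<lambda>i. lin (\<lambda>j. lin (\<lambda>k. vsc (he H' (fst k)) (vsc (he H' (fst j)) (vsc (he H2 (fst i))
            (bv (snd k, snd j)))))  (co (snd i))) (hc H' \<phi>)) (hc H2 a)"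
      by (simp add: bcp_cop_bv lin_lin lin_tens lin_lfun_vsc case_prod_unfold lfun_cmult lfun_tens
                    eps_def[symmetric] hopf_eps_mul[OF H'] mult_ac)
    also have "\<dots> = bv (a, \<phi>)"
      by (simp only: coaction_counit[OF counit, where F = "\<lambda>x. vsc c (vsc d (bv (x, z)))" for c d z]
                     hopf_counit_left[OF H', where F = "\<lambda>x. vsc c (bv (z, x))" for c z]
                     hopf_counit_left[OF H2, where F = "\<lambda>x. bv (x, \<phi>)"])
    finally show ?thesis unfolding i .
  qed
qed (intro lin_map_intros)+

lemma dcp_mul_tens_unit:
  assumes H1: "hopf_algebra H1" and H2: "hopf_algebra H2" and mp: "matched_pair H1 H2 lt rt"
  shows "dcp_mul H1 H2 lt rt (tens X (hu H2)) (tens Y (hu H2)) = tens (mul H1 X Y) (hu H2)"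
proof (rule bilinear_eqI[where f = "\<lambda>X Y. dcp_mul H1 H2 lt rt (tens X (hu H2)) (tens Y (hu H2))"])
  fix h g
  define B where "B = (\<lambda>U V. lin (\<lambda>j. tens (mul H1 (bv h) (lin2 lt U (bv (fst j))))
                                          (mul H2 (lin2 rt V (bv (snd j))) (hu H2))) (hc H1 g))"
  have "lin_map (\<lambda>U. B U V)" "lin_map (\<lambda>V. B U V)" for U V
    unfolding B_def by (intro lin_map_intros)+
  note B_tens = lin_tens_bilinear[of B, OF this]
  have "dcp_mul H1 H2 lt rt (tens (bv h) (hu H2)) (tens (bv g) (hu H2)) =
        lin (\<lambda>(i1, i2). B (bv i1) (bv i2)) (cop H2 (hu H2))"
    unfolding dcp_mul_tens_bv B_def by (simp only: case_prod_unfold)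
  also have "\<dots> = B (hu H2) (hu H2)"
    by (simp only: hopf_cop_unit[OF H2] B_tens)
  also have "\<dots> = lin (\<lambda>j. vsc (he H1 (snd j)) (tens (mul H1 (bv h) (bv (fst j))) (hu H2))) (hc H1 g)"
    unfolding B_def
    by (simp add: matched_pair_lt_unit_left[OF mp] matched_pair_rt_unit_left[OF mp] hopf_unit_mul[OF H2]
                  lin_comm_simps del: lin2_bv1 lin2_bv2)
  also have "\<dots> = tens (mul H1 (bv h) (bv g)) (hu H2)"
    by (rule hopf_counit_right[OF H1])
  finally show "dcp_mul H1 H2 lt rt (tens (bv h) (hu H2)) (tens (bv g) (hu H2)) = tens (mul H1 (bv h) (bv g)) (hu H2)" .
qed (intro lin_map_intros)+

lemma dcp_cop_tens_unit:
  assumes H2: "hopf_algebra H2"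
  shows "dcp_cop H1 H2 (tens (bv g) (hu H2)) =
         lin (\<lambda>j. tens (tens (bv (fst j)) (hu H2)) (tens (bv (snd j)) (hu H2))) (hc H1 g)"
proof -
  have "dcp_cop H1 H2 (tens (bv g) (hu H2)) =
        lin (\<lambda>i. lin (\<lambda>k. lin (\<lambda>j. bv ((fst i, fst j), (snd i, snd j))) (hc H2 k)) (hu H2)) (hc H1 g)"
    unfolding tens_bv_left
    by (simp add: lin_map_lin_comm[OF lin_map_dcp_cop[OF lin_map_id]] dcp_cop_bv case_prod_unfold)
       (rule lin_swap)
  also have "\<dots> = lin (\<lambda>j. tens (tens (bv (fst j)) (hu H2)) (tens (bv (snd j)) (hu H2))) (hc H1 g)"
    by (simp add: lin_lin[symmetric] cop_def[symmetric] hopf_cop_unit[OF H2] lin_tens tens_bv_left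
                  lin_comm_simps del: tens_bv)
       (subst lin_swap, rule refl)
  finally show ?thesis .
qed

lemma emb_dcp_eq_assoc_r: "emb_dcp H' X = assoc_r (tens X (hu H'))"
proof (rule lin_map_eqI[where v = X])
  show "emb_dcp H' (bv i) = assoc_r (tens (bv i) (hu H'))" for i
    using assoc_r_tens[of "bv (fst i)" "bv (snd i)" "hu H'"] by (cases i) (simp add: emb_dcp_def)
qed (intro lin_map_intros)+

lemma emb_dcp_mul:
  assumes H1: "hopf_algebra H1" and H2: "hopf_algebra H2" and H': "hopf_algebra H'"
    and mp: "matched_pair H1 H2 lt rt" and dp: "dual_pairing H' H1 p" and nd: "nondegenerate p"
    and ra_dual: "\<forall>\<phi> a h. pair p (lin2 ra \<phi> a) h = pair p \<phi> (lin2 lt a h)"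
  shows "emb_dcp H' (dcp_mul H1 H2 lt rt X Y) =
         A1_mul H1 H2 H' lt rt p ra (emb_dcp H' X) (emb_dcp H' Y)"
proof -
  have "A1_mul H1 H2 H' lt rt p ra (emb_dcp H' X) (emb_dcp H' Y) =
        lin (\<lambda>y. assoc_r (tens (dcp_mul H1 H2 lt rt X (bv (fst y)))
                                (mul H' (act1 H' p ra (hu H') (bv (snd y))) (hu H'))))
            (dcp_cop H1 H2 Y)"
    by (simp only: emb_dcp_eq_assoc_r A1_mul_assoc_r_tens)
  also have "\<dots> = lin (\<lambda>y. vsc (he H1 (fst (snd y)) * he H2 (snd (snd y)))
                               (emb_dcp H' (dcp_mul H1 H2 lt rt X (bv (fst y)))))
                     (dcp_cop H1 H2 Y)"
    by (simp add: act1_unit_bv[OF H' mp dp nd ra_dual, of "fst z" "snd z" for z, simplified]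
                  lin_comm_simps hopf_unit_mul[OF H'] emb_dcp_eq_assoc_r del: vsc_vsc)
  also have "\<dots> = emb_dcp H' (dcp_mul H1 H2 lt rt X
      (lin (\<lambda>y. vsc (he H1 (fst (snd y)) * he H2 (snd (snd y))) (bv (fst y))) (dcp_cop H1 H2 Y)))"
    by (simp only: lin_comm_simps)
  also have "\<dots> = emb_dcp H' (dcp_mul H1 H2 lt rt X Y)"
    by (simp only: dcp_counit[OF H1 H2])
  finally show ?thesis by simp
qed

lemma emb_bcp_eq_tens: "emb_bcp H1 X = tens (hu H1) X"
proof (rule lin_map_eqI[where v = X])
  show "emb_bcp H1 (bv i) = tens (hu H1) (bv i)" for i
    by (cases i) (simp add: emb_bcp_def)
qed (intro lin_map_intros)+

lemma emb_bcp_mul: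
  assumes H1: "hopf_algebra H1" and H2: "hopf_algebra H2" and H': "hopf_algebra H'"
    and mp: "matched_pair H1 H2 lt rt" and dp: "dual_pairing H' H1 p"
    and counit: "\<forall>a. lin (\<lambda>(c, b). vsc (he H' c) (bv b)) (lin co a) = a"
  shows "emb_bcp H1 (bcp_mul H2 H' ra X Y) = A2_mul H1 H2 H' lt p ra co (emb_bcp H1 X) (emb_bcp H1 Y)"
proof -
  have "A2_mul H1 H2 H' lt p ra co (emb_bcp H1 X) (emb_bcp H1 Y) =
        lin (\<lambda>z. tens (mul H1 (hu H1) (act2 H1 lt p (bv (fst z)) (hu H1))) (bcp_mul H2 H' ra (bv (snd z)) Y))
            (bcp_cop H2 H' co X)"
    by (simp only: emb_bcp_eq_tens A2_mul_tens)
  also have "\<dots> = lin (\<lambda>z. vsc (he H2 (fst (fst z)) * he H' (snd (fst z)))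
                             (tens (hu H1) (bcp_mul H2 H' ra (bv (snd z)) Y)))
                     (bcp_cop H2 H' co X)"
    by (simp add: act2_unit_bv[OF H1 mp dp, of "fst z" "snd z" for z, simplified]
                  hopf_unit_mul[OF H1] lin_comm_simps del: vsc_vsc)
  also have "\<dots> = tens (hu H1) (bcp_mul H2 H' ra
      (lin (\<lambda>z. vsc (he H2 (fst (fst z)) * he H' (snd (fst z))) (bv (snd z))) (bcp_cop H2 H' co X)) Y)"
    by (simp only: lin_comm_simps)
  also have "\<dots> = emb_bcp H1 (bcp_mul H2 H' ra X Y)"
    by (simp only: bcp_counit[OF H2 H' counit] emb_bcp_eq_tens)
  finally show ?thesis by simp
qed

lemma emb_hw_tens: "emb_hw H2 (tens X Y) = tens X (tens (hu H2) Y)"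
proof (rule bilinear_eqI[where f = "\<lambda>X Y. emb_hw H2 (tens X Y)"])
  show "emb_hw H2 (tens (bv i) (bv j)) = tens (bv i) (tens (hu H2) (bv j))" for i j
    unfolding emb_hw_def by simp
qed (intro lin_map_intros)+

lemma emb_hw_mul_bv:
  assumes H1: "hopf_algebra H1" and H2: "hopf_algebra H2"
    and mp: "matched_pair H1 H2 lt rt" and nd: "nondegenerate p"
    and ra_dual: "\<forall>\<phi> a h. pair p (lin2 ra \<phi> a) h = pair p \<phi> (lin2 lt a h)"
  shows "emb_hw H2 (hw_mul H1 H' p (bv (h, \<phi>)) (bv (g, \<psi>))) =
         A1_mul H1 H2 H' lt rt p ra (emb_hw H2 (bv (h, \<phi>))) (emb_hw H2 (bv (g, \<psi>)))"
proof -
  define B where "B = (\<lambda>Y1 Y2. assoc_r (tens (dcp_mul H1 H2 lt rt (tens (bv h) (hu H2)) Y1)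
                                             (mul H' (act1 H' p ra (bv \<phi>) Y2) (bv \<psi>))))"
  have "lin_map (\<lambda>Y1. B Y1 Y2)" "lin_map (\<lambda>Y2. B Y1 Y2)" for Y1 Y2
    unfolding B_def by (intro lin_map_intros)+
  note B_tens = lin_tens_bilinear[of B, OF this]
  have emb_hw_bv: "emb_hw H2 (bv (x, \<chi>)) = assoc_r (tens (tens (bv x) (hu H2)) (bv \<chi>))" for x \<chi>
    unfolding emb_hw_def by simp
  have "A1_mul H1 H2 H' lt rt p ra (emb_hw H2 (bv (h, \<phi>))) (emb_hw H2 (bv (g, \<psi>))) =
        lin (\<lambda>(y1, y2). B (bv y1) (bv y2)) (dcp_cop H1 H2 (tens (bv g) (hu H2)))"
    unfolding emb_hw_bv A1_mul_assoc_r_tens B_def by (simp only: case_prod_unfold)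
  also have "\<dots> = lin (\<lambda>j. B (tens (bv (fst j)) (hu H2)) (tens (bv (snd j)) (hu H2))) (hc H1 g)"
    by (simp only: dcp_cop_tens_unit[OF H2] lin_lin B_tens)
  also have "\<dots> = lin (\<lambda>j. assoc_r (tens (tens (mul H1 (bv h) (bv (fst j))) (hu H2))
      (mul H' (lin (\<lambda>k. vsc (p (fst k) (snd j)) (bv (snd k))) (hc H' \<phi>)) (bv \<psi>)))) (hc H1 g)"
    unfolding B_def
    by (simp only: dcp_mul_tens_unit[OF H1 H2 mp] act1_tens_bv dual_act_unit_right[OF mp nd ra_dual])
  also have "\<dots> = emb_hw H2 (hw_mul H1 H' p (bv (h, \<phi>)) (bv (g, \<psi>)))"
    unfolding hw_mul_def by (simp add: lin_comm_simps emb_hw_tens lin_tens case_prod_unfold)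
  finally show ?thesis by simp
qed

lemma emb_hw_mul:
  assumes H1: "hopf_algebra H1" and H2: "hopf_algebra H2"
    and mp: "matched_pair H1 H2 lt rt" and nd: "nondegenerate p"
    and ra_dual: "\<forall>\<phi> a h. pair p (lin2 ra \<phi> a) h = pair p \<phi> (lin2 lt a h)"
  shows "emb_hw H2 (hw_mul H1 H' p X Y) = A1_mul H1 H2 H' lt rt p ra (emb_hw H2 X) (emb_hw H2 Y)"
proof (rule bilinear_eqI[where f = "\<lambda>X Y. emb_hw H2 (hw_mul H1 H' p X Y)"])
  show "emb_hw H2 (hw_mul H1 H' p (bv i) (bv j)) =
        A1_mul H1 H2 H' lt rt p ra (emb_hw H2 (bv i)) (emb_hw H2 (bv j))" for i j
    using emb_hw_mul_bv[OF assms] by (cases i, cases j) simp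
qed (intro lin_map_intros)+

lemma inj_by_lookup:
  fixes E :: "'i vec \<Rightarrow> 'k"
  assumes "\<And>x y m. E x = E y \<Longrightarrow> Poly_Mapping.lookup x m * c = Poly_Mapping.lookup y m * c" "c \<noteq> 0"
  shows "inj E"
proof (rule injI, rule poly_mapping_eqI)
  fix x y m
  assume "E x = E y"
  then have "Poly_Mapping.lookup x m * c = Poly_Mapping.lookup y m * c" by (rule assms(1))
  then show "Poly_Mapping.lookup x m = Poly_Mapping.lookup y m" using assms(2) by simp
qed

lemma inj_emb_dcp: assumes "hopf_algebra H'" shows "inj (emb_dcp H')"
proof -
  obtain k where "Poly_Mapping.lookup (hu H') k \<noteq> 0" using hopf_unit_nonzero[OF assms] by blast
  then show ?thesis
  proof (rule inj_by_lookup[rotated])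
    fix x y m assume "emb_dcp H' x = emb_dcp H' y"
    then have "Poly_Mapping.lookup (emb_dcp H' x) (fst m, snd m, k) = Poly_Mapping.lookup (emb_dcp H' y) (fst m, snd m, k)"
      by simp
    then show "Poly_Mapping.lookup x m * Poly_Mapping.lookup (hu H') k = Poly_Mapping.lookup y m * Poly_Mapping.lookup (hu H') k"
      by (simp add: emb_dcp_eq_assoc_r lookup_assoc_r lookup_tens)
  qed
qed

lemma inj_emb_bcp: assumes "hopf_algebra H1" shows "inj (emb_bcp H1)"
proof -
  obtain k where "Poly_Mapping.lookup (hu H1) k \<noteq> 0" using hopf_unit_nonzero[OF assms] by blast
  then show ?thesis
  proof (rule inj_by_lookup[rotated])
    fix x y m assume "emb_bcp H1 x = emb_bcp H1 y"
    then have "Poly_Mapping.lookup (emb_bcp H1 x) (k, m) = Poly_Mapping.lookup (emb_bcp H1 y) (k, m)"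
      by simp
    then show "Poly_Mapping.lookup x m * Poly_Mapping.lookup (hu H1) k = Poly_Mapping.lookup y m * Poly_Mapping.lookup (hu H1) k"
      by (simp add: emb_bcp_eq_tens lookup_tens mult.commute)
  qed
qed

lemma lookup_emb_hw:
  "Poly_Mapping.lookup (emb_hw H2 x) (i, k, j) = Poly_Mapping.lookup x (i, j) * Poly_Mapping.lookup (hu H2) k"
proof -
  have "Poly_Mapping.lookup (emb_hw H2 x) (i, k, j) =
        (\<Sum>m\<in>Poly_Mapping.keys x. Poly_Mapping.lookup x m * (if m = (i, j) then Poly_Mapping.lookup (hu H2) k else 0))"
    unfolding emb_hw_def lookup_lin
    by (rule sum.cong) (auto simp: case_prod_unfold lookup_tens lookup_bv prod_eq_iff)
  then show ?thesis by (simp only: sum_keys_delta)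
qed

lemma inj_emb_hw: assumes "hopf_algebra H2" shows "inj (emb_hw H2)"
proof -
  obtain k where "Poly_Mapping.lookup (hu H2) k \<noteq> 0" using hopf_unit_nonzero[OF assms] by blast
  then show ?thesis
  proof (rule inj_by_lookup[rotated])
    fix x y m assume "emb_hw H2 x = emb_hw H2 y"
    then have "Poly_Mapping.lookup (emb_hw H2 x) (fst m, k, snd m) = Poly_Mapping.lookup (emb_hw H2 y) (fst m, k, snd m)"
      by simp
    then show "Poly_Mapping.lookup x m * Poly_Mapping.lookup (hu H2) k = Poly_Mapping.lookup y m * Poly_Mapping.lookup (hu H2) k"
      by (simp add: lookup_emb_hw)
  qed
qed

theorem mainTheorem1:
  fixes H1 :: "'a hopf" and H2 :: "'b hopf" and H' :: "'c hopf"
    and lt :: "'b \<Rightarrow> 'a \<Rightarrow> 'a vec"   \<comment> \<open>a \<triangleright> h\<close>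
    and rt :: "'b \<Rightarrow> 'a \<Rightarrow> 'b vec"   \<comment> \<open>a \<triangleleft> h\<close>
    and p :: "'c \<Rightarrow> 'a \<Rightarrow> complex"   \<comment> \<open>\<langle>\<phi>, h\<rangle>\<close>
    and co :: "'b \<Rightarrow> ('c \<times> 'b) vec"  \<comment> \<open>a \<mapsto> a(0) \<otimes> a(1)\<close>
    and ra :: "'c \<Rightarrow> 'b \<Rightarrow> 'c vec"   \<comment> \<open>\<phi> \<triangleleft> a\<close>
  assumes H1: "hopf_algebra H1" and H2: "hopf_algebra H2" and H': "hopf_algebra H'"
    and mp: "matched_pair H1 H2 lt rt"
    and dp: "dual_pairing H' H1 p" and nd: "nondegenerate p"
    and coass: "\<forall>a. assoc_r (tmap (cop H') id (lin co a)) = tmap id (lin co) (lin co a)"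
    and counit: "\<forall>a. lin (\<lambda>(c, b). vsc (he H' c) (bv b)) (lin co a) = a"
    and rt_co: "\<forall>a h. lin2 rt a h = lin (\<lambda>(c, b). vsc (pair p (bv c) h) (bv b)) (lin co a)"
    and ra_dual: "\<forall>\<phi> a h. pair p (lin2 ra \<phi> a) h = pair p \<phi> (lin2 lt a h)"
  shows
    "(\<forall>u v. A1_mul H1 H2 H' lt rt p ra u v = A2_mul H1 H2 H' lt p ra co u v) \<and>
     inj (emb_dcp H') \<and>
     (\<forall>x y. emb_dcp H' (dcp_mul H1 H2 lt rt x y) =
            A2_mul H1 H2 H' lt p ra co (emb_dcp H' x) (emb_dcp H' y)) \<and>
     emb_dcp H' (tens (hu H1) (hu H2)) = tens (hu H1) (tens (hu H2) (hu H')) \<and>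
     inj (emb_bcp H1) \<and>
     (\<forall>x y. emb_bcp H1 (bcp_mul H2 H' ra x y) =
            A2_mul H1 H2 H' lt p ra co (emb_bcp H1 x) (emb_bcp H1 y)) \<and>
     emb_bcp H1 (tens (hu H2) (hu H')) = tens (hu H1) (tens (hu H2) (hu H')) \<and>
     inj (emb_hw H2) \<and>
     (\<forall>x y. emb_hw H2 (hw_mul H1 H' p x y) =
            A2_mul H1 H2 H' lt p ra co (emb_hw H2 x) (emb_hw H2 y)) \<and>
     emb_hw H2 (tens (hu H1) (hu H')) = tens (hu H1) (tens (hu H2) (hu H'))"
proof -
  note A1_eq_A2 = A1_mul_eq_A2_mul[OF H1 dp rt_co]
  have "emb_dcp H' (dcp_mul H1 H2 lt rt x y) = A2_mul H1 H2 H' lt p ra co (emb_dcp H' x) (emb_dcp H' y)"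
    for x y by (simp only: emb_dcp_mul[OF H1 H2 H' mp dp nd ra_dual] A1_eq_A2)
  moreover have "emb_hw H2 (hw_mul H1 H' p x y) = A2_mul H1 H2 H' lt p ra co (emb_hw H2 x) (emb_hw H2 y)"
    for x y by (simp only: emb_hw_mul[OF H1 H2 mp nd ra_dual] A1_eq_A2)
  moreover have "emb_dcp H' (tens (hu H1) (hu H2)) = tens (hu H1) (tens (hu H2) (hu H'))"
    by (simp only: emb_dcp_eq_assoc_r assoc_r_tens)
  ultimately show ?thesis
    using A1_eq_A2 emb_bcp_mul[OF H1 H2 H' mp dp counit] emb_bcp_eq_tens emb_hw_tens
      inj_emb_dcp[OF H'] inj_emb_bcp[OF H1] inj_emb_hw[OF H2]
    by blast
qed

end
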